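(* Let $0<q<1$. Then \[ \sum_{n=0}^{\infty}\frac{(1+q^{2n+1})\,q^{n}}{(1-q^{2n+1})^{2}}=\frac{\pi_{q}^{2}}{(1-q^{2})^{2}q^{1/2}}. \]
   Context: Let $0<q<1$. With $(z;q)_\infty=\prod_{k\ge0}(1-zq^k)$, Gosper's $q$-pi is $\pi_q=(1-q^2)q^{1/4}\frac{(q^2;q^2)_\infty^2}{(q;q^2)_\infty^2}$. *)

theory Defs
  imports "HOL-Analysis.Analysis"
begin

definition qpoch_inf :: "real \<Rightarrow> real \<Rightarrow> real" where
  "qpoch_inf z q = (\<Prod>k. (1 - z * q ^ k))"

definition gosper_pi :: "real \<Rightarrow> real" where
  "gosper_pi q = (1 - q\<^sup>2) * q powr (1/4) *
     (qpoch_inf (q\<^sup>2) (q\<^sup>2))\<^sup>2 / (qpoch_inf q (q\<^sup>2))\<^sup>2"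

end

theory Submission
  imports Defs
begin

text \<open>
  Fix N and let k, m range over integers with -N \<le> k, m < N. Partial fractions in y give
  \[\prod_{k \neq -1} (1 - y q^{2k+1}) / \prod_m (1 - y q^{2m}) = \sum_m c_m / (1 - y q^{2m}).\]
  At y = q the left side is, after shifting indices, -q^N (q^2;q^2)_N (q^2;q^2)_{N-1} / (q;q^2)_N^2,
  and every c_m is a power of q times a quotient of finite q-Pochhammer symbols. The poles m = k and
  m = -k-1 together contribute -q^N (q^{3k+1} + q^k) / (1 - q^{2k+1})^2 times a quotient that
  tends to (q;q^2)_\<infinity>^2 / (q^2;q^2)_\<infinity>^2. Tannery's theorem, with a geometric majorant, lets
  N tend to infinity under the sum, so the series equals (q^2;q^2)_\<infinity>^4 / (q;q^2)_\<infinity>^4, which is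
  the stated value by the definition of Gosper's q-pi.
\<close>

section \<open>Finite q-Pochhammer symbols\<close>

definition qpoch :: "real \<Rightarrow> real \<Rightarrow> nat \<Rightarrow> real" where
  "qpoch a p n = (\<Prod>k<n. 1 - a * p ^ k)"

lemma qpoch_Suc: "qpoch a p (Suc n) = qpoch a p n * (1 - a * p ^ n)"
  by (simp add: qpoch_def)

lemma qpoch_factor_pos:
  fixes a p :: real
  assumes "0 \<le> a" "a < 1" "0 \<le> p" "p \<le> 1"
  shows "0 < 1 - a * p ^ k"
proof -
  have "p ^ k \<le> 1"
    using assms by (simp add: power_le_one)
  then have "a * p ^ k \<le> a"
    using assms by (simp add: mult_left_le)
  then show ?thesis using assms by simp
qed

lemma qpoch_pos:
  assumes "0 \<le> a" "a < 1" "0 \<le> p" "p \<le> 1"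
  shows "0 < qpoch a p n"
  unfolding qpoch_def using qpoch_factor_pos[OF assms] by (intro prod_pos) auto

lemma qpoch_le_one:
  assumes "0 \<le> a" "a < 1" "0 \<le> p" "p \<le> 1"
  shows "qpoch a p n \<le> 1"
  unfolding qpoch_def using qpoch_factor_pos[OF assms] assms
  by (intro prod_le_1) (auto intro: less_imp_le)

lemma decseq_qpoch:
  assumes "0 \<le> a" "a < 1" "0 \<le> p" "p \<le> 1"
  shows "decseq (qpoch a p)"
proof (rule decseq_SucI)
  fix n
  show "qpoch a p (Suc n) \<le> qpoch a p n"
    using qpoch_pos[OF assms, of n] assms by (simp add: qpoch_Suc mult_left_le)
qed

lemma convergent_prod_qpoch:
  fixes a p :: real
  assumes "0 \<le> a" "a < 1" "0 \<le> p" "p < 1"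
  shows "convergent_prod (\<lambda>k. 1 - a * p ^ k)"
proof -
  have "summable (\<lambda>k. a * p ^ k)"
    using assms by (intro summable_mult summable_geometric) auto
  then have "summable (\<lambda>k. norm ((1 - a * p ^ k) - 1))"
    using assms by simp
  then show ?thesis
    by (intro abs_convergent_prod_imp_convergent_prod summable_imp_abs_convergent_prod)
qed

lemma qpoch_tendsto:
  assumes "0 \<le> a" "a < 1" "0 \<le> p" "p < 1"
  shows "qpoch a p \<longlonglongrightarrow> qpoch_inf a p"
proof (rule LIMSEQ_imp_Suc)
  have "qpoch a p (Suc n) = (\<Prod>k\<le>n. 1 - a * p ^ k)" for n
    by (simp add: qpoch_def lessThan_Suc_atMost)
  then show "(\<lambda>n. qpoch a p (Suc n)) \<longlonglongrightarrow> qpoch_inf a p"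
    using convergent_prod_LIMSEQ[OF convergent_prod_qpoch[OF assms]]
    by (simp add: qpoch_inf_def)
qed

lemma qpoch_tendsto_shift:
  assumes "0 \<le> a" "a < 1" "0 \<le> p" "p < 1"
  shows "(\<lambda>n. qpoch a p (n + c)) \<longlonglongrightarrow> qpoch_inf a p"
    and "(\<lambda>n. qpoch a p (n - c)) \<longlonglongrightarrow> qpoch_inf a p"
  using LIMSEQ_ignore_initial_segment[OF qpoch_tendsto[OF assms]]
    filterlim_compose[OF qpoch_tendsto[OF assms] filterlim_minus_const_nat_at_top]
  by simp_all

lemma qpoch_inf_pos:
  assumes "0 \<le> a" "a < 1" "0 \<le> p" "p < 1"
  shows "0 < qpoch_inf a p"
proof -
  have "1 - a * p ^ k \<noteq> 0" for k
    using qpoch_factor_pos[of a p k] assms by simp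
  then have "qpoch_inf a p \<noteq> 0"
    unfolding qpoch_inf_def by (intro prodinf_nonzero[OF convergent_prod_qpoch[OF assms]])
  moreover have "0 \<le> qpoch_inf a p"
    using qpoch_pos[of a p] assms
    by (intro LIMSEQ_le_const[OF qpoch_tendsto[OF assms]]) (auto intro: less_imp_le)
  ultimately show ?thesis by simp
qed

lemma qpoch_inf_le_qpoch:
  assumes "0 \<le> a" "a < 1" "0 \<le> p" "p < 1"
  shows "qpoch_inf a p \<le> qpoch a p n"
  using decseq_qpoch[of a p] qpoch_tendsto[OF assms] assms by (intro decseq_ge) auto

lemma int_interval_eq_image_union:
  "{- int A..<int B} = int ` {..<B} \<union> (\<lambda>k. - int k - 1) ` {..<A}"
proof (intro equalityI subsetI)
  fix x assume x: "x \<in> {- int A..<int B}"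
  show "x \<in> int ` {..<B} \<union> (\<lambda>k. - int k - 1) ` {..<A}"
  proof (cases "x \<ge> 0")
    case True
    then have "x = int (nat x)" "nat x < B" using x by auto
    then show ?thesis by blast
  next
    case False
    then have "x = - int (nat (- x - 1)) - 1" "nat (- x - 1) < A" using x by auto
    then show ?thesis by blast
  qed
qed auto

lemma prod_int_interval_split:
  fixes f :: "int \<Rightarrow> 'a::comm_monoid_mult"
  shows "(\<Prod>x\<in>{- int A..<int B}. f x) = (\<Prod>k<B. f (int k)) * (\<Prod>k<A. f (- int k - 1))"
  unfolding int_interval_eq_image_union
  by (subst prod.union_disjoint) (auto simp: prod.reindex inj_on_def)

lemma sum_int_interval_split:
  fixes f :: "int \<Rightarrow> 'a::comm_monoid_add"
  shows "(\<Sum>x\<in>{- int A..<int B}. f x) = (\<Sum>k<B. f (int k)) + (\<Sum>k<A. f (- int k - 1))"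
  unfolding int_interval_eq_image_union
  by (subst sum.union_disjoint) (auto simp: sum.reindex inj_on_def)

lemma prod_int_interval_remove_zero_split:
  fixes f :: "int \<Rightarrow> 'a::comm_monoid_mult"
  assumes "B \<ge> 1"
  shows "(\<Prod>x\<in>{- int A..<int B} - {0}. f x) = (\<Prod>k<B-1. f (int k + 1)) * (\<Prod>k<A. f (- int k - 1))"
proof -
  have "(\<Prod>x\<in>{- int A..<int B} - {0}. f x) = (\<Prod>x\<in>{- int A..<int B}. if x = 0 then 1 else f x)"
    by (simp add: prod.If_cases Diff_eq)
  also have "\<dots> = (\<Prod>k<B. if k = 0 then 1 else f (int k)) * (\<Prod>k<A. f (- int k - 1))"
    by (simp add: prod_int_interval_split)
  also have "(\<Prod>k<B. if k = 0 then 1 else f (int k)) = (\<Prod>k<B-1. f (int k + 1))"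
    using assms by (cases B) (simp_all del: prod.lessThan_Suc add: prod.lessThan_Suc_shift add.commute)
  finally show ?thesis .
qed

lemma prod_int_shift:
  fixes g :: "int \<Rightarrow> 'a::comm_monoid_mult"
  shows "(\<Prod>k\<in>{a..<b} - {c}. g (k - m)) = (\<Prod>e\<in>{a-m..<b-m} - {c-m}. g e)"
  by (rule prod.reindex_bij_witness[of _ "\<lambda>e. e + m" "\<lambda>k. k - m"]) auto

lemma prod_one_minus_inverse:
  fixes f :: "'i \<Rightarrow> 'a::field"
  assumes "\<forall>x\<in>S. f x \<noteq> 0"
  shows "(\<Prod>x\<in>S. 1 - 1 / f x) = (-1) ^ card S * (\<Prod>x\<in>S. 1 - f x) / (\<Prod>x\<in>S. f x)"
proof -
  have "(\<Prod>x\<in>S. 1 - 1 / f x) = (\<Prod>x\<in>S. - 1 * ((1 - f x) / f x))"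
    using assms by (intro prod.cong) (auto simp: field_simps)
  also have "\<dots> = (\<Prod>x\<in>S. - 1) * ((\<Prod>x\<in>S. 1 - f x) / (\<Prod>x\<in>S. f x))"
    by (simp only: prod.distrib prod_dividef)
  finally show ?thesis
    by (simp only: prod_constant times_divide_eq_right)
qed

lemma divide_one_minus_inverse:
  fixes x v w :: "'a::field"
  assumes "x \<noteq> 0" "x \<noteq> 1" "w \<noteq> 0"
  shows "v / (1 - 1 / x) / ((1 - x) * w) = - x * (v / w) / (1 - x)\<^sup>2"
proof -
  define d where "d = 1 - x"
  have d: "d \<noteq> 0" and inverse: "1 - 1 / x = - d / x"
    using assms by (auto simp: d_def field_simps)
  show ?thesis
    unfolding d_def[symmetric] inverse using assms d by (simp add: field_simps power2_eq_square)
qed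

lemma divide_one_minus_sq_inverse:
  fixes y :: "'a::field"
  assumes "y \<noteq> 0"
  shows "1 / y / (1 - 1 / y)\<^sup>2 = y / (1 - y)\<^sup>2"
proof -
  have "1 - 1 / y = (y - 1) / y"
    using assms by (simp add: field_simps)
  then have "(1 - 1 / y)\<^sup>2 = (1 - y)\<^sup>2 / y\<^sup>2"
    by (simp add: power_divide power2_commute)
  then show ?thesis
    using assms by (simp add: power2_eq_square)
qed

lemma prod_odd_powers: "(\<Prod>k<n. x * (x\<^sup>2) ^ k) = (x::'a::comm_monoid_mult) ^ (n * n)"
proof (induction n)
  case (Suc n)
  have "Suc n * Suc n = n * n + (2 * n + 1)" by simp
  then have "x ^ (Suc n * Suc n) = x ^ (n * n) * (x * (x\<^sup>2) ^ n)"
    by (simp add: power_add power_mult power2_eq_square power_mult_distrib mult_ac)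
  then show ?case using Suc by simp
qed simp

lemma prod_even_powers: "(\<Prod>k<n. x\<^sup>2 * (x\<^sup>2) ^ k) = (x::'a::comm_monoid_mult) ^ (n * (n + 1))"
proof (induction n)
  case (Suc n)
  have "Suc n * (Suc n + 1) = n * (n + 1) + 2 * (n + 1)" by simp
  then have "x ^ (Suc n * (Suc n + 1)) = x ^ (n * (n + 1)) * (x\<^sup>2 * (x\<^sup>2) ^ n)"
    by (simp add: power_add power_mult power2_eq_square power_mult_distrib mult_ac)
  then show ?case using Suc by simp
qed simp

section \<open>Partial fractions\<close>

lemma partial_fraction_step:
  fixes y a u b c :: "'a::field"
  assumes "a \<noteq> 0" "u \<noteq> 0" "a \<noteq> u" "1 - y * a \<noteq> 0" "1 - y * u \<noteq> 0"
  shows "c / (1 - y * u) * ((1 - y * b) / (1 - y * a))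
       = c * (1 - b / u) / (1 - a / u) / (1 - y * u) + (1 - b / a) / (1 - y * a) * (c / (1 - u / a))"
proof -
  have ua: "u - a \<noteq> 0"
    using assms by simp
  have quotients: "1 - a / u = (u - a) / u" "1 - u / a = - (u - a) / a" "1 - b / u = (u - b) / u" "1 - b / a = (a - b) / a"
    using assms by (auto simp: field_simps)
  have "c * (1 - b / u) / (1 - a / u) / (1 - y * u) + (1 - b / a) / (1 - y * a) * (c / (1 - u / a))
      = c / (u - a) * ((u - b) / (1 - y * u) - (a - b) / (1 - y * a))"
    unfolding quotients using assms ua by (simp add: divide_simps) (simp add: algebra_simps)
  also have "(u - b) / (1 - y * u) - (a - b) / (1 - y * a) = (u - a) * (1 - y * b) / ((1 - y * u) * (1 - y * a))"
    using assms by (simp add: diff_frac_eq) (simp add: algebra_simps)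
  finally show ?thesis
    using ua by simp
qed

definition partial_fraction_coeff :: "('i \<Rightarrow> 'a::field) \<Rightarrow> ('i \<Rightarrow> 'a) \<Rightarrow> 'i set \<Rightarrow> 'i set \<Rightarrow> 'i \<Rightarrow> 'a" where
  "partial_fraction_coeff \<alpha> \<beta> S T s = (\<Prod>t\<in>T. 1 - \<beta> t / \<alpha> s) / (\<Prod>s'\<in>S - {s}. 1 - \<alpha> s' / \<alpha> s)"

lemma partial_fraction_coeff_insert:
  assumes "finite S" "finite T" "a \<notin> S" "b \<notin> T" "s \<in> S"
  shows "partial_fraction_coeff \<alpha> \<beta> (insert a S) (insert b T) s
         = partial_fraction_coeff \<alpha> \<beta> S T s * (1 - \<beta> b / \<alpha> s) / (1 - \<alpha> a / \<alpha> s)"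
proof -
  have "insert a S - {s} = insert a (S - {s})"
    using assms by auto
  then show ?thesis
    using assms by (simp add: partial_fraction_coeff_def ac_simps)
qed

lemma partial_fraction_coeff_insert_new:
  assumes "finite S" "finite T" "a \<notin> S" "b \<notin> T"
  shows "partial_fraction_coeff \<alpha> \<beta> (insert a S) (insert b T) a
         = (1 - \<beta> b / \<alpha> a) * ((\<Prod>t\<in>T. 1 - 1 / \<alpha> a * \<beta> t) / (\<Prod>s\<in>S. 1 - 1 / \<alpha> a * \<alpha> s))"
proof -
  have "insert a S - {a} = S"
    using assms by auto
  then show ?thesis
    using assms by (simp add: partial_fraction_coeff_def mult.commute)
qed

lemma partial_fractions:
  fixes \<alpha> \<beta> :: "'i \<Rightarrow> 'a::field"
  assumes "finite S" "finite T" "card S = Suc (card T)" "inj_on \<alpha> S"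
    "\<forall>s\<in>S. \<alpha> s \<noteq> 0" "\<forall>s\<in>S. 1 - y * \<alpha> s \<noteq> 0"
  shows "(\<Prod>t\<in>T. 1 - y * \<beta> t) / (\<Prod>s\<in>S. 1 - y * \<alpha> s)
         = (\<Sum>s\<in>S. partial_fraction_coeff \<alpha> \<beta> S T s / (1 - y * \<alpha> s))"
  using assms
proof (induction S arbitrary: T y rule: finite_induct)
  case empty
  then show ?case by simp
next
  case (insert a S)
  show ?case
  proof (cases "S = {}")
    case True
    with insert have "T = {}" by simp
    with True show ?thesis by (simp add: partial_fraction_coeff_def)
  next
    case False
    with insert have "T \<noteq> {}" by auto
    then obtain b where "b \<in> T"
      by blast
    define T' where "T' = T - {b}"
    have T: "T = insert b T'" "b \<notin> T'"
      using \<open>b \<in> T\<close> by (auto simp: T'_def)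
    have "finite T'"
      using insert.prems(1) by (simp add: T'_def)
    moreover have "card S = Suc (card T')"
      using insert.prems(2) insert.hyps(1,2) T calculation by simp
    ultimately have T': "finite T'" "card S = Suc (card T')" .
    have inj: "inj_on \<alpha> S" and distinct: "\<forall>s\<in>S. \<alpha> s \<noteq> \<alpha> a"
      using insert.prems(3) insert.hyps(2) by (auto simp: inj_on_def)
    have nonzero: "\<forall>s\<in>S. \<alpha> s \<noteq> 0" "\<alpha> a \<noteq> 0"
      and poles: "\<forall>s\<in>S. 1 - y * \<alpha> s \<noteq> 0" "1 - y * \<alpha> a \<noteq> 0"
      using insert.prems(4,5) by auto
    note IH = insert.IH[OF T' inj nonzero(1)]
    let ?c = "partial_fraction_coeff \<alpha> \<beta> S T'"
    have new_pole: "\<forall>s\<in>S. 1 - 1 / \<alpha> a * \<alpha> s \<noteq> 0"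
      using distinct nonzero(2) by (auto simp: field_simps)
    have at_new_pole: "(\<Sum>s\<in>S. ?c s / (1 - \<alpha> s / \<alpha> a))
        = (\<Prod>t\<in>T'. 1 - 1 / \<alpha> a * \<beta> t) / (\<Prod>s\<in>S. 1 - 1 / \<alpha> a * \<alpha> s)"
      using IH[OF new_pole] by simp
    have "(\<Prod>t\<in>T. 1 - y * \<beta> t) / (\<Prod>s\<in>insert a S. 1 - y * \<alpha> s)
        = (\<Prod>t\<in>T'. 1 - y * \<beta> t) / (\<Prod>s\<in>S. 1 - y * \<alpha> s) * ((1 - y * \<beta> b) / (1 - y * \<alpha> a))"
      using T T' insert.hyps by (simp add: mult.commute)
    also have "\<dots> = (\<Sum>s\<in>S. ?c s / (1 - y * \<alpha> s) * ((1 - y * \<beta> b) / (1 - y * \<alpha> a)))"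
      by (simp only: IH[OF poles(1)] sum_distrib_right)
    also have "\<dots> = (\<Sum>s\<in>S. ?c s * (1 - \<beta> b / \<alpha> s) / (1 - \<alpha> a / \<alpha> s) / (1 - y * \<alpha> s)
                   + (1 - \<beta> b / \<alpha> a) / (1 - y * \<alpha> a) * (?c s / (1 - \<alpha> s / \<alpha> a)))"
      using nonzero distinct poles by (intro sum.cong refl partial_fraction_step) auto
    also have "\<dots> = (\<Sum>s\<in>S. ?c s * (1 - \<beta> b / \<alpha> s) / (1 - \<alpha> a / \<alpha> s) / (1 - y * \<alpha> s))
                   + (1 - \<beta> b / \<alpha> a) / (1 - y * \<alpha> a)
                     * ((\<Prod>t\<in>T'. 1 - 1 / \<alpha> a * \<beta> t) / (\<Prod>s\<in>S. 1 - 1 / \<alpha> a * \<alpha> s))"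
      by (simp only: sum.distrib sum_distrib_left[symmetric] at_new_pole)
    also have "\<dots> = (\<Sum>s\<in>insert a S. partial_fraction_coeff \<alpha> \<beta> (insert a S) T s / (1 - y * \<alpha> s))"
      using T T' insert.hyps
      by (simp add: partial_fraction_coeff_insert partial_fraction_coeff_insert_new add.commute)
    finally show ?thesis .
  qed
qed

section \<open>The finite identity\<close>

lemma power_int_odd_nat: "x powi (2 * int k + 1) = (x::'a::division_ring) * (x\<^sup>2) ^ k"
proof -
  have "2 * int k + 1 = int (Suc (2 * k))" by simp
  then show ?thesis by (simp only: power_int_of_nat power_Suc power_mult)
qed

lemma power_int_odd_neg: "x powi (2 * (- int k - 1) + 1) = 1 / ((x::'a::field) * (x\<^sup>2) ^ k)"
proof -
  have "2 * (- int k - 1) + 1 = - (2 * int k + 1)" by simp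
  then show ?thesis by (simp only: power_int_minus_divide power_int_odd_nat)
qed

lemma power_int_even_Suc: "x powi (2 * (int k + 1)) = (x::'a::division_ring)\<^sup>2 * (x\<^sup>2) ^ k"
proof -
  have "2 * (int k + 1) = int (2 * Suc k)" by simp
  then show ?thesis by (simp only: power_int_of_nat power_mult power_Suc)
qed

lemma power_int_even_neg: "x powi (2 * (- int k - 1)) = 1 / ((x::'a::field)\<^sup>2 * (x\<^sup>2) ^ k)"
proof -
  have "2 * (- int k - 1) = - (2 * (int k + 1))" by simp
  then show ?thesis by (simp only: power_int_minus_divide power_int_even_Suc)
qed

lemma inj_power_int:
  fixes a :: "'a::linordered_field"
  assumes "0 < a" "a < 1"
  shows "inj (power_int a)"
proof (rule injI)
  fix m n :: int
  assume "a powi m = a powi n"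
  then show "m = n"
    using power_int_strict_decreasing[OF _ assms, of m n]
      power_int_strict_decreasing[OF _ assms, of n m]
    by (cases m n rule: linorder_cases) auto
qed

text \<open>The coefficient c_m of the partial fraction expansion above, evaluated at y = q.\<close>

definition pole_coeff :: "real \<Rightarrow> nat \<Rightarrow> int \<Rightarrow> real" where
  "pole_coeff q N m =
     (\<Prod>k\<in>{- int N..<int N} - {-1}. 1 - q powi (2 * k + 1) / q powi (2 * m)) /
     ((1 - q * q powi (2 * m)) * (\<Prod>k\<in>{- int N..<int N} - {m}. 1 - q powi (2 * k) / q powi (2 * m)))"

definition pf_term_nonneg :: "real \<Rightarrow> nat \<Rightarrow> nat \<Rightarrow> real" where
  "pf_term_nonneg q N k = q ^ (3 * k + 1) / (1 - q ^ (2 * k + 1))\<^sup>2 *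
     (qpoch q (q\<^sup>2) (N + k) * qpoch q (q\<^sup>2) (N - k) /
      (qpoch (q\<^sup>2) (q\<^sup>2) (N + k) * qpoch (q\<^sup>2) (q\<^sup>2) (N - k - 1)))"

definition pf_term_neg :: "real \<Rightarrow> nat \<Rightarrow> nat \<Rightarrow> real" where
  "pf_term_neg q N k = q ^ k / (1 - q ^ (2 * k + 1))\<^sup>2 *
     (qpoch q (q\<^sup>2) (N - k - 1) * qpoch q (q\<^sup>2) (N + k + 1) /
      (qpoch (q\<^sup>2) (q\<^sup>2) (N - k - 1) * qpoch (q\<^sup>2) (q\<^sup>2) (N + k)))"

context
  fixes q :: real
  assumes q: "0 < q" "q < 1"
begin

lemma square_bounds: "0 \<le> q\<^sup>2" "q\<^sup>2 < 1"
  using q by (auto simp: power_less_one_iff)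

lemma qpoch_odd_pos: "0 < qpoch q (q\<^sup>2) n"
  using q by (intro qpoch_pos) (auto simp: power_le_one)

lemma qpoch_even_pos: "0 < qpoch (q\<^sup>2) (q\<^sup>2) n"
  using q by (intro qpoch_pos) (auto simp: power_le_one power_less_one_iff)

lemma prod_one_minus_power_int_odd:
  "(\<Prod>e\<in>{- int A..<int B}. 1 - q powi (2 * e + 1))
     = qpoch q (q\<^sup>2) B * ((-1) ^ A * qpoch q (q\<^sup>2) A / q ^ (A * A))"
proof -
  have "(\<Prod>e\<in>{- int A..<int B}. 1 - q powi (2 * e + 1))
      = (\<Prod>k<B. 1 - q powi (2 * int k + 1)) * (\<Prod>k<A. 1 - q powi (2 * (- int k - 1) + 1))"
    by (rule prod_int_interval_split)
  also have "(\<Prod>k<B. 1 - q powi (2 * int k + 1)) = qpoch q (q\<^sup>2) B"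
    by (simp only: power_int_odd_nat qpoch_def)
  also have "(\<Prod>k<A. 1 - q powi (2 * (- int k - 1) + 1)) = (\<Prod>k<A. 1 - 1 / (q * (q\<^sup>2) ^ k))"
    by (simp only: power_int_odd_neg)
  also have "\<dots> = (-1) ^ A * qpoch q (q\<^sup>2) A / q ^ (A * A)"
    using q by (subst prod_one_minus_inverse) (simp_all add: qpoch_def prod_odd_powers)
  finally show ?thesis .
qed

lemma prod_one_minus_power_int_even:
  assumes "B \<ge> 1"
  shows "(\<Prod>e\<in>{- int A..<int B} - {0}. 1 - q powi (2 * e))
     = qpoch (q\<^sup>2) (q\<^sup>2) (B - 1) * ((-1) ^ A * qpoch (q\<^sup>2) (q\<^sup>2) A / q ^ (A * (A + 1)))"
proof -
  have "(\<Prod>e\<in>{- int A..<int B} - {0}. 1 - q powi (2 * e))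
      = (\<Prod>k<B-1. 1 - q powi (2 * (int k + 1))) * (\<Prod>k<A. 1 - q powi (2 * (- int k - 1)))"
    by (rule prod_int_interval_remove_zero_split[OF assms])
  also have "(\<Prod>k<B-1. 1 - q powi (2 * (int k + 1))) = qpoch (q\<^sup>2) (q\<^sup>2) (B - 1)"
    by (simp only: power_int_even_Suc qpoch_def)
  also have "(\<Prod>k<A. 1 - q powi (2 * (- int k - 1))) = (\<Prod>k<A. 1 - 1 / (q\<^sup>2 * (q\<^sup>2) ^ k))"
    by (simp only: power_int_even_neg)
  also have "\<dots> = (-1) ^ A * qpoch (q\<^sup>2) (q\<^sup>2) A / q ^ (A * (A + 1))"
    using q by (subst prod_one_minus_inverse) (simp_all add: qpoch_def prod_even_powers)
  finally show ?thesis .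
qed

lemma power_int_odd_ne_one: "q powi (2 * m + 1) \<noteq> 1"
proof
  assume "q powi (2 * m + 1) = 1"
  then have "q powi (2 * m + 1) = q powi 0" by simp
  then have "2 * m + 1 = 0" by (rule injD[OF inj_power_int[OF q]])
  then show False by presburger
qed

lemma pole_numerator:
  assumes "int A = int N + m" "int B = int N - m" "B \<ge> 1"
  shows "(1 - 1 / q powi (2 * m + 1)) *
           (\<Prod>k\<in>{- int N..<int N} - {-1}. 1 - q powi (2 * k + 1) / q powi (2 * m))
         = qpoch q (q\<^sup>2) B * ((-1) ^ A * qpoch q (q\<^sup>2) A / q ^ (A * A))"
proof -
  have bounds: "- int N - m = - int A" "int N - m = int B"
    using assms by simp_all
  have "q powi (2 * k + 1) / q powi (2 * m) = q powi (2 * (k - m) + 1)" for k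
    using q by (simp add: power_int_diff[symmetric] algebra_simps)
  then have "(\<Prod>k\<in>{- int N..<int N} - {-1}. 1 - q powi (2 * k + 1) / q powi (2 * m))
      = (\<Prod>k\<in>{- int N..<int N} - {-1}. 1 - q powi (2 * (k - m) + 1))"
    by simp
  also have "\<dots> = (\<Prod>e\<in>{- int A..<int B} - {-1 - m}. 1 - q powi (2 * e + 1))"
    using prod_int_shift[where g = "\<lambda>e. 1 - q powi (2 * e + 1)" and c = "-1"]
    by (simp only: bounds)
  finally have shifted: "(\<Prod>k\<in>{- int N..<int N} - {-1}. 1 - q powi (2 * k + 1) / q powi (2 * m))
      = (\<Prod>e\<in>{- int A..<int B} - {-1 - m}. 1 - q powi (2 * e + 1))" .
  have "q powi (2 * (-1 - m) + 1) = 1 / q powi (2 * m + 1)"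
    using power_int_minus_divide[of q "2 * m + 1"] by (simp add: algebra_simps)
  moreover have "-1 - m \<in> {- int A..<int B}"
    using assms by auto
  ultimately show ?thesis
    unfolding shifted prod_one_minus_power_int_odd[symmetric]
    by (simp add: prod.remove[of _ "-1 - m"])
qed

lemma pole_denominator:
  assumes "int A = int N + m" "int B = int N - m" "B \<ge> 1"
  shows "(\<Prod>k\<in>{- int N..<int N} - {m}. 1 - q powi (2 * k) / q powi (2 * m))
         = qpoch (q\<^sup>2) (q\<^sup>2) (B - 1) * ((-1) ^ A * qpoch (q\<^sup>2) (q\<^sup>2) A / q ^ (A * (A + 1)))"
proof -
  have bounds: "- int N - m = - int A" "int N - m = int B" "m - m = 0"
    using assms by simp_all
  have "q powi (2 * k) / q powi (2 * m) = q powi (2 * (k - m))" for k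
    using q by (simp add: power_int_diff[symmetric] algebra_simps)
  then have "(\<Prod>k\<in>{- int N..<int N} - {m}. 1 - q powi (2 * k) / q powi (2 * m))
      = (\<Prod>k\<in>{- int N..<int N} - {m}. 1 - q powi (2 * (k - m)))"
    by simp
  also have "\<dots> = (\<Prod>e\<in>{- int A..<int B} - {0}. 1 - q powi (2 * e))"
    using prod_int_shift[where g = "\<lambda>e. 1 - q powi (2 * e)" and c = m]
    by (simp only: bounds)
  finally show ?thesis
    using prod_one_minus_power_int_even[OF assms(3)] by simp
qed

lemma pole_coeff_eq:
  assumes "int A = int N + m" "int B = int N - m" "B \<ge> 1"
  shows "pole_coeff q N m
         = - (q ^ A) * (q powi (2 * m + 1) / (1 - q powi (2 * m + 1))\<^sup>2) *
             (qpoch q (q\<^sup>2) A * qpoch q (q\<^sup>2) B / (qpoch (q\<^sup>2) (q\<^sup>2) A * qpoch (q\<^sup>2) (q\<^sup>2) (B - 1)))"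
proof -
  define x where "x = q powi (2 * m + 1)"
  define V where "V = qpoch q (q\<^sup>2) B * ((-1) ^ A * qpoch q (q\<^sup>2) A / q ^ (A * A))"
  define W where "W = qpoch (q\<^sup>2) (q\<^sup>2) (B - 1) * ((-1) ^ A * qpoch (q\<^sup>2) (q\<^sup>2) A / q ^ (A * (A + 1)))"
  have x: "x \<noteq> 0" "x \<noteq> 1" "1 - 1 / x \<noteq> 0"
    using q power_int_odd_ne_one[of m] by (auto simp: x_def field_simps)
  have W: "W \<noteq> 0"
    using q qpoch_even_pos[of A] qpoch_even_pos[of "B - 1"] by (simp add: W_def)
  have "q ^ (A * (A + 1)) = q ^ (A * A) * q ^ A"
    by (simp add: power_add algebra_simps)
  then have ratio: "V / W = q ^ A * (qpoch q (q\<^sup>2) A * qpoch q (q\<^sup>2) B /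
                              (qpoch (q\<^sup>2) (q\<^sup>2) A * qpoch (q\<^sup>2) (q\<^sup>2) (B - 1)))"
    using q qpoch_even_pos[of A] qpoch_even_pos[of "B - 1"] by (simp add: V_def W_def field_simps)
  have "q * q powi (2 * m) = x"
    using q by (simp add: x_def power_int_add_1')
  moreover have "(\<Prod>k\<in>{- int N..<int N} - {-1}. 1 - q powi (2 * k + 1) / q powi (2 * m)) = V / (1 - 1 / x)"
    unfolding V_def pole_numerator[OF assms, folded x_def, symmetric] using x(3) by simp
  ultimately have "pole_coeff q N m = V / (1 - 1 / x) / ((1 - x) * W)"
    by (simp only: pole_coeff_def pole_denominator[OF assms] W_def)
  also have "\<dots> = - x * (V / W) / (1 - x)\<^sup>2"
    using x(1,2) W by (rule divide_one_minus_inverse)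
  finally show ?thesis
    by (simp add: ratio x_def mult_ac)
qed

lemma partial_fraction_lhs:
  "(\<Prod>k\<in>{- int (Suc n)..<int (Suc n)} - {-1}. 1 - q * q powi (2 * k + 1)) /
     (\<Prod>m\<in>{- int (Suc n)..<int (Suc n)}. 1 - q * q powi (2 * m))
   = - (q ^ Suc n) * qpoch (q\<^sup>2) (q\<^sup>2) (Suc n) * qpoch (q\<^sup>2) (q\<^sup>2) n / (qpoch q (q\<^sup>2) (Suc n))\<^sup>2"
proof -
  have bounds: "- int (Suc n) - -1 = - int n" "int (Suc n) - -1 = int (Suc (Suc n))" "(-1::int) - -1 = 0"
    by simp_all
  have "q * q powi (2 * k + 1) = q powi (2 * (k - -1))" for k
    using q by (simp add: power_int_add_1'[symmetric] algebra_simps)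
  then have "(\<Prod>k\<in>{- int (Suc n)..<int (Suc n)} - {-1}. 1 - q * q powi (2 * k + 1))
      = (\<Prod>k\<in>{- int (Suc n)..<int (Suc n)} - {-1}. 1 - q powi (2 * (k - -1)))"
    by simp
  also have "\<dots> = (\<Prod>e\<in>{- int n..<int (Suc (Suc n))} - {0}. 1 - q powi (2 * e))"
    using prod_int_shift[where g = "\<lambda>e. 1 - q powi (2 * e)" and c = "-1" and m = "-1"]
    by (simp only: bounds)
  also have "\<dots> = qpoch (q\<^sup>2) (q\<^sup>2) (Suc n) * ((-1) ^ n * qpoch (q\<^sup>2) (q\<^sup>2) n / q ^ (n * (n + 1)))"
    using prod_one_minus_power_int_even[of "Suc (Suc n)" n] by simp
  finally have num: "(\<Prod>k\<in>{- int (Suc n)..<int (Suc n)} - {-1}. 1 - q * q powi (2 * k + 1))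
      = qpoch (q\<^sup>2) (q\<^sup>2) (Suc n) * ((-1) ^ n * qpoch (q\<^sup>2) (q\<^sup>2) n / q ^ (n * (n + 1)))" .
  have "q * q powi (2 * m) = q powi (2 * m + 1)" for m
    using q by (simp add: power_int_add_1')
  then have den: "(\<Prod>m\<in>{- int (Suc n)..<int (Suc n)}. 1 - q * q powi (2 * m))
      = qpoch q (q\<^sup>2) (Suc n) * ((-1) ^ Suc n * qpoch q (q\<^sup>2) (Suc n) / q ^ (Suc n * Suc n))"
    by (simp only: prod_one_minus_power_int_odd)
  have "q ^ (Suc n * Suc n) = q ^ (n * (n + 1)) * q ^ Suc n"
    by (simp add: power_add[symmetric] algebra_simps)
  then show ?thesis
    unfolding num den using q qpoch_odd_pos[of "Suc n"]
    by (simp add: field_simps power2_eq_square)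
qed

lemma partial_fraction_expansion:
  assumes "N \<ge> 1"
  shows "(\<Prod>k\<in>{- int N..<int N} - {-1}. 1 - q * q powi (2 * k + 1)) /
           (\<Prod>m\<in>{- int N..<int N}. 1 - q * q powi (2 * m))
         = (\<Sum>m\<in>{- int N..<int N}. pole_coeff q N m)"
proof -
  let ?S = "{- int N..<int N}"
  have "-1 \<in> ?S"
    using assms by simp
  then have card: "card ?S = Suc (card (?S - {-1}))"
    by (simp add: card_Diff_singleton)
  have inj: "inj_on (\<lambda>m. q powi (2 * m)) ?S"
    by (auto simp: inj_on_def dest!: injD[OF inj_power_int[OF q]])
  have "1 - q * q powi (2 * m) \<noteq> 0" for m
    using q power_int_odd_ne_one[of m] by (simp add: power_int_add_1')
  then show ?thesis
    unfolding pole_coeff_def using q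
    by (subst partial_fractions[OF _ _ card inj]) (auto simp: partial_fraction_coeff_def mult.commute)
qed

lemma pole_coeff_nonneg:
  assumes "k < N"
  shows "pole_coeff q N (int k) = - (q ^ N) * pf_term_nonneg q N k"
proof -
  have "int (N + k) = int N + int k" "int (N - k) = int N - int k" "N - k \<ge> 1"
    using assms by auto
  note pole = pole_coeff_eq[OF this]
  have "2 * int k + 1 = int (2 * k + 1)"
    by simp
  then have "q powi (2 * int k + 1) = q ^ (2 * k + 1)"
    by (simp only: power_int_of_nat)
  moreover have "N + k + (2 * k + 1) = N + (3 * k + 1)"
    by simp
  then have exponents: "q ^ (N + k) * q ^ (2 * k + 1) = q ^ N * q ^ (3 * k + 1)"
    by (metis power_add)
  ultimately show ?thesis
    unfolding pole pf_term_nonneg_def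
    by (simp only: mult_minus_left times_divide_eq_right times_divide_eq_left mult.assoc[symmetric])
qed

lemma pole_coeff_neg:
  assumes "k < N"
  shows "pole_coeff q N (- int k - 1) = - (q ^ N) * pf_term_neg q N k"
proof -
  have "int (N - k - 1) = int N + (- int k - 1)" "int (N + k + 1) = int N - (- int k - 1)"
    "N + k + 1 \<ge> 1"
    using assms by auto
  note pole = pole_coeff_eq[OF this]
  have pole_point: "q powi (2 * (- int k - 1) + 1) = 1 / q ^ (2 * k + 1)"
    using power_int_odd_neg[of q k] by (simp add: power_mult)
  have index: "N + k + 1 - 1 = N + k"
    by simp
  have "N - k - 1 + (2 * k + 1) = N + k"
    using assms by simp
  then have exponents: "q ^ (N - k - 1) * q ^ (2 * k + 1) = q ^ N * q ^ k"
    by (metis power_add)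
  have pole_nonzero: "q ^ (2 * k + 1) \<noteq> 0"
    using q by simp
  show ?thesis
    unfolding pole pole_point index divide_one_minus_sq_inverse[OF pole_nonzero] pf_term_neg_def
    using exponents
    by (simp only: mult_minus_left times_divide_eq_right times_divide_eq_left mult.assoc[symmetric])
qed

lemma finite_identity:
  "qpoch (q\<^sup>2) (q\<^sup>2) (Suc n) * qpoch (q\<^sup>2) (q\<^sup>2) n / (qpoch q (q\<^sup>2) (Suc n))\<^sup>2
     = (\<Sum>k<Suc n. pf_term_nonneg q (Suc n) k + pf_term_neg q (Suc n) k)"
proof -
  define N where "N = Suc n"
  have "- (q ^ N) * (qpoch (q\<^sup>2) (q\<^sup>2) N * qpoch (q\<^sup>2) (q\<^sup>2) n / (qpoch q (q\<^sup>2) N)\<^sup>2)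
      = (\<Sum>m\<in>{- int N..<int N}. pole_coeff q N m)"
    using partial_fraction_lhs[of n] partial_fraction_expansion[of N] by (simp add: N_def)
  also have "\<dots> = (\<Sum>k<N. pole_coeff q N (int k)) + (\<Sum>k<N. pole_coeff q N (- int k - 1))"
    by (rule sum_int_interval_split)
  also have "\<dots> = - (q ^ N) * (\<Sum>k<N. pf_term_nonneg q N k + pf_term_neg q N k)"
    by (simp add: pole_coeff_nonneg pole_coeff_neg sum_negf sum.distrib sum_distrib_left[symmetric] algebra_simps)
  finally have "- (q ^ N) * (qpoch (q\<^sup>2) (q\<^sup>2) N * qpoch (q\<^sup>2) (q\<^sup>2) n / (qpoch q (q\<^sup>2) N)\<^sup>2)
      = - (q ^ N) * (\<Sum>k<N. pf_term_nonneg q N k + pf_term_neg q N k)" .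
  moreover have "- (q ^ N) \<noteq> 0"
    using q by simp
  ultimately show ?thesis
    unfolding N_def by (metis mult_left_cancel)
qed

section \<open>Passage to the limit\<close>

lemma qpoch_odd_le_one: "qpoch q (q\<^sup>2) n \<le> 1"
  using q by (intro qpoch_le_one) (auto simp: power_le_one)

lemma qpoch_inf_odd_pos: "0 < qpoch_inf q (q\<^sup>2)"
  using q by (intro qpoch_inf_pos) (auto simp: power_less_one_iff)

lemma qpoch_inf_even_pos: "0 < qpoch_inf (q\<^sup>2) (q\<^sup>2)"
  using q by (intro qpoch_inf_pos) (auto simp: power_less_one_iff)

lemma qpoch_inf_even_le: "qpoch_inf (q\<^sup>2) (q\<^sup>2) \<le> qpoch (q\<^sup>2) (q\<^sup>2) n"
  using q by (intro qpoch_inf_le_qpoch) (auto simp: power_less_one_iff)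

lemma one_minus_odd_power_bounds:
  "0 < 1 - q ^ (2 * k + 1)" "(1 - q)\<^sup>2 \<le> (1 - q ^ (2 * k + 1))\<^sup>2"
proof -
  have "q ^ (2 * k + 1) \<le> q"
    using q power_decreasing[of 1 "2 * k + 1" q] by simp
  moreover have "q ^ (2 * k + 1) < 1"
    using power_Suc_less_one[OF q, of "2 * k"] by simp
  ultimately show "0 < 1 - q ^ (2 * k + 1)" "(1 - q)\<^sup>2 \<le> (1 - q ^ (2 * k + 1))\<^sup>2"
    using q by (auto intro: power_mono)
qed

lemma pf_term_shape_bounds:
  fixes c :: real and k i j i' j' :: nat
  assumes "0 \<le> c"
  defines "t \<equiv> c / (1 - q ^ (2 * k + 1))\<^sup>2 *
             (qpoch q (q\<^sup>2) i * qpoch q (q\<^sup>2) j / (qpoch (q\<^sup>2) (q\<^sup>2) i' * qpoch (q\<^sup>2) (q\<^sup>2) j'))"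
  shows "0 \<le> t" "t \<le> c / (1 - q)\<^sup>2 * (1 / (qpoch_inf (q\<^sup>2) (q\<^sup>2))\<^sup>2)"
proof -
  let ?L = "qpoch_inf (q\<^sup>2) (q\<^sup>2)"
  have num: "0 \<le> qpoch q (q\<^sup>2) i * qpoch q (q\<^sup>2) j" "qpoch q (q\<^sup>2) i * qpoch q (q\<^sup>2) j \<le> 1"
    using qpoch_odd_pos[of i] qpoch_odd_pos[of j] qpoch_odd_le_one[of i] qpoch_odd_le_one[of j]
    by (auto intro: mult_le_one)
  have "?L * ?L \<le> qpoch (q\<^sup>2) (q\<^sup>2) i' * qpoch (q\<^sup>2) (q\<^sup>2) j'"
    using qpoch_inf_even_pos qpoch_inf_even_le[of i'] qpoch_inf_even_le[of j'] qpoch_even_pos[of i']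
    by (intro mult_mono) auto
  then have den: "?L\<^sup>2 \<le> qpoch (q\<^sup>2) (q\<^sup>2) i' * qpoch (q\<^sup>2) (q\<^sup>2) j'"
    by (metis power2_eq_square)
  have quotient: "qpoch q (q\<^sup>2) i * qpoch q (q\<^sup>2) j / (qpoch (q\<^sup>2) (q\<^sup>2) i' * qpoch (q\<^sup>2) (q\<^sup>2) j') \<le> 1 / ?L\<^sup>2"
    using num den qpoch_inf_even_pos by (intro frac_le) auto
  have factor: "c / (1 - q ^ (2 * k + 1))\<^sup>2 \<le> c / (1 - q)\<^sup>2"
    using assms one_minus_odd_power_bounds[of k] q by (intro divide_left_mono) auto
  show "0 \<le> t"
    unfolding t_def using assms num qpoch_even_pos[of i'] qpoch_even_pos[of j'] by simp
  show "t \<le> c / (1 - q)\<^sup>2 * (1 / ?L\<^sup>2)"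
    unfolding t_def using factor quotient assms num qpoch_even_pos[of i'] qpoch_even_pos[of j']
    by (intro mult_mono) auto
qed

lemma pf_terms_bound:
  "\<bar>pf_term_nonneg q N k + pf_term_neg q N k\<bar>
     \<le> (q * (q ^ 3) ^ k + q ^ k) / ((1 - q)\<^sup>2 * (qpoch_inf (q\<^sup>2) (q\<^sup>2))\<^sup>2)"
proof -
  note nonneg = pf_term_shape_bounds[of "q ^ (3 * k + 1)" k "N + k" "N - k" "N + k" "N - k - 1", folded pf_term_nonneg_def]
  note neg = pf_term_shape_bounds[of "q ^ k" k "N - k - 1" "N + k + 1" "N - k - 1" "N + k", folded pf_term_neg_def]
  have "q ^ (3 * k + 1) = q * (q ^ 3) ^ k"
    by (simp add: power_mult)
  then show ?thesis
    using nonneg neg q by (simp add: add_divide_distrib)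
qed

lemma pf_terms_tendsto:
  "(\<lambda>N. pf_term_nonneg q N k + pf_term_neg q N k)
     \<longlonglongrightarrow> (qpoch_inf q (q\<^sup>2) / qpoch_inf (q\<^sup>2) (q\<^sup>2))\<^sup>2 * ((1 + q ^ (2 * k + 1)) * q ^ k / (1 - q ^ (2 * k + 1))\<^sup>2)"
proof -
  let ?Lq = "qpoch_inf q (q\<^sup>2)" and ?Lp = "qpoch_inf (q\<^sup>2) (q\<^sup>2)"
  note odd = qpoch_tendsto_shift[OF less_imp_le[OF q(1)] q(2) square_bounds]
    and even = qpoch_tendsto_shift[OF square_bounds square_bounds]
  have "?Lp \<noteq> 0"
    using qpoch_inf_even_pos by simp
  then have "(\<lambda>N. pf_term_nonneg q N k + pf_term_neg q N k)
      \<longlonglongrightarrow> q ^ (3 * k + 1) / (1 - q ^ (2 * k + 1))\<^sup>2 * (?Lq * ?Lq / (?Lp * ?Lp))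
          + q ^ k / (1 - q ^ (2 * k + 1))\<^sup>2 * (?Lq * ?Lq / (?Lp * ?Lp))"
    unfolding pf_term_nonneg_def pf_term_neg_def diff_diff_left add.assoc
    by (intro tendsto_intros odd even) simp_all
  also have "q ^ (3 * k + 1) / (1 - q ^ (2 * k + 1))\<^sup>2 * (?Lq * ?Lq / (?Lp * ?Lp))
              + q ^ k / (1 - q ^ (2 * k + 1))\<^sup>2 * (?Lq * ?Lq / (?Lp * ?Lp))
      = (?Lq / ?Lp)\<^sup>2 * ((q ^ (3 * k + 1) + q ^ k) / (1 - q ^ (2 * k + 1))\<^sup>2)"
    by (simp add: add_divide_distrib power2_eq_square algebra_simps)
  also have "q ^ (3 * k + 1) + q ^ k = (1 + q ^ (2 * k + 1)) * q ^ k"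
    by (simp add: algebra_simps flip: power_add)
  finally show ?thesis .
qed

lemma finite_identity_tendsto:
  "(\<lambda>n. qpoch (q\<^sup>2) (q\<^sup>2) (Suc n) * qpoch (q\<^sup>2) (q\<^sup>2) n / (qpoch q (q\<^sup>2) (Suc n))\<^sup>2)
     \<longlonglongrightarrow> (qpoch_inf (q\<^sup>2) (q\<^sup>2) / qpoch_inf q (q\<^sup>2))\<^sup>2"
proof -
  have "qpoch_inf q (q\<^sup>2) \<noteq> 0"
    using qpoch_inf_odd_pos by simp
  then have "(\<lambda>n. qpoch (q\<^sup>2) (q\<^sup>2) (Suc n) * qpoch (q\<^sup>2) (q\<^sup>2) n / (qpoch q (q\<^sup>2) (Suc n))\<^sup>2)
      \<longlonglongrightarrow> qpoch_inf (q\<^sup>2) (q\<^sup>2) * qpoch_inf (q\<^sup>2) (q\<^sup>2) / (qpoch_inf q (q\<^sup>2))\<^sup>2"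
    using qpoch_tendsto[OF square_bounds square_bounds] qpoch_tendsto[OF less_imp_le[OF q(1)] q(2) square_bounds]
    by (intro tendsto_intros LIMSEQ_Suc) auto
  then show ?thesis
    by (simp add: power_divide power2_eq_square)
qed

lemma pf_terms_sum_tendsto:
  defines "s \<equiv> \<lambda>n. (1 + q ^ (2 * n + 1)) * q ^ n / (1 - q ^ (2 * n + 1))\<^sup>2"
  shows "summable s"
    and "(\<lambda>N. \<Sum>k<N. pf_term_nonneg q N k + pf_term_neg q N k)
           \<longlonglongrightarrow> (qpoch_inf q (q\<^sup>2) / qpoch_inf (q\<^sup>2) (q\<^sup>2))\<^sup>2 * (\<Sum>n. s n)"
proof -
  define C where "C = (qpoch_inf q (q\<^sup>2) / qpoch_inf (q\<^sup>2) (q\<^sup>2))\<^sup>2"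
  define a where "a k N = (if k < N then pf_term_nonneg q N k + pf_term_neg q N k else 0)" for k N
  define M where "M k = (q * (q ^ 3) ^ k + q ^ k) / ((1 - q)\<^sup>2 * (qpoch_inf (q\<^sup>2) (q\<^sup>2))\<^sup>2)" for k
  have "(\<lambda>N. a k N) \<longlonglongrightarrow> C * s k" for k
  proof -
    have "eventually (\<lambda>N. pf_term_nonneg q N k + pf_term_neg q N k = a k N) sequentially"
      using eventually_gt_at_top[of k] by eventually_elim (simp add: a_def)
    then show ?thesis
      using pf_terms_tendsto[of k] by (simp add: C_def s_def tendsto_cong)
  qed
  moreover have "eventually (\<lambda>(k, N). norm (a k N) \<le> M k) (at_top \<times>\<^sub>F sequentially)"
    using pf_terms_bound q by (intro always_eventually) (simp add: a_def M_def)
  moreover have "summable M"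
    unfolding M_def add_divide_distrib using q
    by (intro summable_add summable_divide summable_mult summable_geometric)
       (simp_all add: power_less_one_iff)
  ultimately have tannery: "summable (\<lambda>k. norm (C * s k))" "(\<lambda>N. \<Sum>k. a k N) \<longlonglongrightarrow> (\<Sum>k. C * s k)"
    using tannerys_theorem[of a "\<lambda>k. C * s k" sequentially M] by auto
  have "C \<noteq> 0"
    using qpoch_inf_odd_pos qpoch_inf_even_pos by (simp add: C_def)
  then show "summable s"
    using summable_norm_cancel[OF tannery(1)] by (simp add: summable_cmult_iff)
  moreover have "(\<Sum>k. a k N) = (\<Sum>k<N. pf_term_nonneg q N k + pf_term_neg q N k)" for N
    using sums_If_finite_set[of "{..<N}" "\<lambda>k. pf_term_nonneg q N k + pf_term_neg q N k"]
    by (simp add: a_def sums_iff)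
  ultimately show "(\<lambda>N. \<Sum>k<N. pf_term_nonneg q N k + pf_term_neg q N k) \<longlonglongrightarrow> C * (\<Sum>n. s n)"
    using tannery(2) by (simp add: suminf_mult)
qed

lemma sums_qpoch_inf_quotient:
  "(\<lambda>n. (1 + q ^ (2 * n + 1)) * q ^ n / (1 - q ^ (2 * n + 1))\<^sup>2)
     sums ((qpoch_inf (q\<^sup>2) (q\<^sup>2) / qpoch_inf q (q\<^sup>2)) ^ 4)"
  (is "?s sums ((?Lp / ?Lq) ^ 4)")
proof -
  have "(\<lambda>n. \<Sum>k<Suc n. pf_term_nonneg q (Suc n) k + pf_term_neg q (Suc n) k) \<longlonglongrightarrow> (?Lp / ?Lq)\<^sup>2"
    using finite_identity_tendsto by (simp only: finite_identity)
  moreover have "(\<lambda>n. \<Sum>k<Suc n. pf_term_nonneg q (Suc n) k + pf_term_neg q (Suc n) k)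
      \<longlonglongrightarrow> (?Lq / ?Lp)\<^sup>2 * suminf ?s"
    using LIMSEQ_Suc[OF pf_terms_sum_tendsto(2)] by simp
  ultimately have "(?Lq / ?Lp)\<^sup>2 * suminf ?s = (?Lp / ?Lq)\<^sup>2"
    by (rule LIMSEQ_unique[rotated])
  then have "suminf ?s = (?Lp / ?Lq) ^ 4"
    using qpoch_inf_odd_pos qpoch_inf_even_pos
    by (simp add: field_simps power2_eq_square eval_nat_numeral)
  then show ?thesis
    using pf_terms_sum_tendsto(1) by (simp add: sums_iff)
qed

end

theorem mainTheorem15:
  fixes q :: real
  assumes "0 < q" and "q < 1"
  shows "(\<lambda>n::nat. (1 + q ^ (2*n+1)) * q ^ n / (1 - q ^ (2*n+1))\<^sup>2)
           sums ((gosper_pi q)\<^sup>2 / ((1 - q\<^sup>2)\<^sup>2 * q powr (1/2)))"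
proof -
  have "q\<^sup>2 < 1"
    using assms by (simp add: power_less_one_iff)
  then have "(1 - q\<^sup>2)\<^sup>2 * q powr (1/2) \<noteq> 0"
    using assms by simp
  moreover have "(q powr (1/4))\<^sup>2 = q powr (1/2)"
    by (simp add: power2_eq_square flip: powr_add)
  ultimately have "(gosper_pi q)\<^sup>2 / ((1 - q\<^sup>2)\<^sup>2 * q powr (1/2))
      = (qpoch_inf (q\<^sup>2) (q\<^sup>2) / qpoch_inf q (q\<^sup>2)) ^ 4"
    by (simp add: gosper_pi_def power_mult_distrib power_divide flip: power_mult)
  then show ?thesis
    using sums_qpoch_inf_quotient[OF assms] by simp
qed

end
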